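(* Let $d\ge 1$ and let $\mathcal{G}'$ be a $d$-tree decomposition with $\mathcal{G}'\neq\mathcal{K}_1$. Then there exists a $d$-tree decomposition $\mathcal{G}$ such that $\mathcal{G}'$ is obtained from $\mathcal{G}$ by a $d$-tree $j$-extension for some $0\le j\le d-1$.
   Context: A multi-graph is finite and loop-free, possibly with parallel edges. A $d$-tree decomposition is a tuple $\mathcal{G}=(G;T_1,\ldots,T_d)$ where $G$ is a multi-graph and $T_1,\ldots,T_d$ are spanning trees of $G$ whose edge sets partition $E(G)$ (distinct parallel edges are distinct edges). By convention, $\mathcal{K}_1=(K_1;T_1,\ldots,T_d)$, where $K_1$ is the graph with one vertex and no edges and all $T_i$ are edgeless, is a $d$-tree decomposition. For a multi-graph $G$, a $d$-dimensional $j$-extension forms $G'$ by deleting a set $F$ of $j$ edges of $G$ and adding a new vertex $v$ together with $d+j$ new edges joining $v$ to vertices of $G$ (parallel new edges allowed), such that every endpoint of an edge of $F$ is a neighbour of $v$ in $G'$ (for $d=1$ any $j\ge0$ is allowed). A $d$-tree decomposition $\mathcal{G}'=(G';T_1',\ldots,T_d')$ is obtained from $\mathcal{G}=(G;T_1,\ldots,T_d)$ by a $d$-tree $j$-extension ($0\le j\le d-1$) if $G'$ is obtained from $G$ by a $d$-dimensional $j$-extension adding a new vertex $v$, and for each $i$, $T_i'$ is obtained from $T_i$ by a $1$-dimensional $k_i$-extension adding the same vertex $v$, for some $0\le k_i\le d-1$ (so $\sum_i k_i=j$). *)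

theory Defs
  imports Main "HOL-Library.Multiset"
begin

text \<open>A multi-graph on vertex set V is given by a multiset E of edges; each edge is a
  two-element vertex set (loop-free). Parallel edges = multiplicity > 1.\<close>

definition is_mgraph :: "'v set \<Rightarrow> 'v set multiset \<Rightarrow> bool" where
  "is_mgraph V E \<longleftrightarrow> finite V \<and>
     (\<forall>e\<in>#E. \<exists>a b. e = {a, b} \<and> a \<noteq> b \<and> a \<in> V \<and> b \<in> V)"

definition adj :: "'v set multiset \<Rightarrow> ('v \<times> 'v) set" where
  "adj E = {(a, b). {a, b} \<in># E}"

definition mconnected :: "'v set \<Rightarrow> 'v set multiset \<Rightarrow> bool" where
  "mconnected V E \<longleftrightarrow> V \<noteq> {} \<and> (\<forall>a\<in>V. \<forall>b\<in>V. (a, b) \<in> (adj E)\<^sup>*)"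

text \<open>A tree: a connected multi-graph in which every edge is a bridge (no edge lies on a
  cycle, i.e. acyclic; in particular no parallel edges).\<close>
definition is_tree :: "'v set \<Rightarrow> 'v set multiset \<Rightarrow> bool" where
  "is_tree V T \<longleftrightarrow> is_mgraph V T \<and> mconnected V T \<and>
     (\<forall>e\<in>#T. \<not> mconnected V (T - {#e#}))"

definition spanning_tree :: "'v set \<Rightarrow> 'v set multiset \<Rightarrow> 'v set multiset \<Rightarrow> bool" where
  "spanning_tree V E T \<longleftrightarrow> is_tree V T \<and> T \<subseteq># E"

definition dtree_decomp :: "nat \<Rightarrow> 'v set \<Rightarrow> 'v set multiset \<Rightarrow> (nat \<Rightarrow> 'v set multiset) \<Rightarrow> bool" where
  "dtree_decomp d V E Ts \<longleftrightarrow> is_mgraph V E \<and> (\<forall>i<d. spanning_tree V E (Ts i)) \<and>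
     E = (\<Sum>i<d. Ts i)"

definition mext :: "nat \<Rightarrow> nat \<Rightarrow> 'v set \<Rightarrow> 'v set multiset \<Rightarrow> 'v set \<Rightarrow> 'v set multiset \<Rightarrow> 'v \<Rightarrow> bool" where
  "mext d j V E V' E' v \<longleftrightarrow> v \<notin> V \<and> V' = insert v V \<and>
     (\<exists>F N. F \<subseteq># E \<and> size F = j \<and> size N = d + j \<and>
        (\<forall>e\<in>#N. \<exists>u\<in>V. e = {v, u}) \<and> E' = (E - F) + N \<and>
        (\<forall>e\<in>#F. \<forall>w\<in>e. {v, w} \<in># E'))"

definition dtree_ext :: "nat \<Rightarrow> nat \<Rightarrow> 'v set \<Rightarrow> 'v set multiset \<Rightarrow> (nat \<Rightarrow> 'v set multiset)
    \<Rightarrow> 'v set \<Rightarrow> 'v set multiset \<Rightarrow> (nat \<Rightarrow> 'v set multiset) \<Rightarrow> bool" where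
  "dtree_ext d j V E Ts V' E' Ts' \<longleftrightarrow> j \<le> d - 1 \<and>
     (\<exists>v. mext d j V E V' E' v \<and>
        (\<forall>i<d. \<exists>k. k \<le> d - 1 \<and> mext 1 k V (Ts i) V' (Ts' i) v))"

end

(* A d-tree decomposition on n >= 2 vertices has d (n - 1) edges, so its degree sum
   2 d (n - 1) is below 2 d n and some vertex v has degree d + j with j < d.  If v has
   degree k_i + 1 in the tree T_i, delete v from T_i and join its neighbours by a star of
   k_i edges: the result is connected with the right number of edges, hence a spanning
   tree of the remaining vertices.  These trees decompose a multigraph G, and restoring v
   is a d-tree j-extension with j = k_1 + ... + k_d. *)

theory Submission
  imports Defs
begin

lemma sym_adj: "sym (adj E)"
  by (auto simp: sym_def adj_def insert_commute)

lemma adj_rtrancl_sym: "(x, y) \<in> (adj E)\<^sup>* \<Longrightarrow> (y, x) \<in> (adj E)\<^sup>*"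
  using sym_rtrancl[OF sym_adj, of E] by (rule symD)

lemma adj_add_mset: "adj (add_mset {a, b} E) = insert (a, b) (insert (b, a) (adj E))"
  by (auto simp: adj_def doubleton_eq_iff)

lemma adj_mono: "A \<subseteq># B \<Longrightarrow> adj A \<subseteq> adj B"
  by (auto simp: adj_def dest: mset_subset_eqD)

lemma rtrancl_Image_least: "S \<subseteq> C \<Longrightarrow> r `` C \<subseteq> C \<Longrightarrow> r\<^sup>* `` S \<subseteq> C"
  using Image_closed_trancl Image_mono by blast

lemma is_mgraph_edge:
  "is_mgraph V E \<Longrightarrow> e \<in># E \<Longrightarrow> \<exists>a b. e = {a, b} \<and> a \<noteq> b \<and> a \<in> V \<and> b \<in> V"
  by (auto simp: is_mgraph_def)

lemma is_mgraph_adj: "is_mgraph V E \<Longrightarrow> (a, b) \<in> adj E \<Longrightarrow> a \<in> V \<and> b \<in> V \<and> a \<noteq> b"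
  by (force simp: is_mgraph_def adj_def doubleton_eq_iff)

lemma is_mgraph_reach: "is_mgraph V E \<Longrightarrow> S \<subseteq> V \<Longrightarrow> (adj E)\<^sup>* `` S \<subseteq> V"
  by (rule rtrancl_Image_least) (auto dest: is_mgraph_adj)

lemma is_mgraph_submset: "is_mgraph V E \<Longrightarrow> F \<subseteq># E \<Longrightarrow> is_mgraph V F"
  by (auto simp: is_mgraph_def dest: mset_subset_eqD)

lemma is_mgraph_add: "is_mgraph V A \<Longrightarrow> is_mgraph V B \<Longrightarrow> is_mgraph V (A + B)"
  by (auto simp: is_mgraph_def)

lemma is_mgraph_delete_vertex:
  "is_mgraph V E \<Longrightarrow> is_mgraph (V - {v}) (filter_mset (\<lambda>e. v \<notin> e) E)"
  by (fastforce simp: is_mgraph_def)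

lemma mconnectedI: "a \<in> V \<Longrightarrow> V \<subseteq> (adj E)\<^sup>* `` {a} \<Longrightarrow> mconnected V E"
  unfolding mconnected_def by (blast intro: rtrancl_trans adj_rtrancl_sym)

(* Each new edge enlarges the set reachable from S by at most one vertex. *)
lemma card_reach_le:
  assumes "is_mgraph V E" "S \<subseteq> V"
  shows "card ((adj E)\<^sup>* `` S) \<le> card S + size E"
  using assms
proof (induction E arbitrary: S)
  case empty
  then show ?case by (simp add: adj_def)
next
  case (add e E)
  obtain a b where e: "e = {a, b}" and ab: "a \<in> V" "b \<in> V"
    using is_mgraph_edge[OF add.prems(1), of e] by auto
  have g: "is_mgraph V E" using add.prems(1) by (simp add: is_mgraph_def)
  have fin_reach: "finite ((adj E)\<^sup>* `` T)" if "T \<subseteq> V" for T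
    using is_mgraph_reach[OF g that] g finite_subset by (auto simp: is_mgraph_def)
  define R where "R = (adj E)\<^sup>* `` S"
  show ?case
  proof (cases "a \<in> R \<or> b \<in> R")
    case False
    have "(adj (add_mset e E))\<^sup>* `` S \<subseteq> R"
      using False by (intro rtrancl_Image_least)
        (auto simp: R_def e adj_add_mset intro: rtrancl_into_rtrancl)
    then have "card ((adj (add_mset e E))\<^sup>* `` S) \<le> card R"
      using fin_reach[OF add.prems(2)] by (simp add: R_def card_mono)
    then show ?thesis using add.IH[OF g add.prems(2)] by (simp add: R_def)
  next
    case True
    then obtain p q where e': "e = {p, q}" "p \<in> R" "q \<in> V"
      using e ab by (auto simp: insert_commute)
    define R' where "R' = (adj E)\<^sup>* `` insert q S"
    have "R \<subseteq> R'" by (auto simp: R_def R'_def)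
    then have "(adj (add_mset e E))\<^sup>* `` S \<subseteq> R'"
      using e'(2) by (intro rtrancl_Image_least)
        (auto simp: R'_def e'(1) adj_add_mset intro: rtrancl_into_rtrancl)
    then have "card ((adj (add_mset e E))\<^sup>* `` S) \<le> card R'"
      using fin_reach add.prems(2) e'(3) by (simp add: R'_def card_mono)
    also have "\<dots> \<le> card (insert q S) + size E"
      using add.IH[OF g] add.prems(2) e'(3) by (simp add: R'_def)
    also have "\<dots> \<le> card S + size (add_mset e E)"
      using finite_subset[OF add.prems(2)] g by (simp add: is_mgraph_def card_insert_if)
    finally show ?thesis .
  qed
qed

lemma mconnected_card_le:
  assumes "is_mgraph V E" "mconnected V E"
  shows "card V \<le> size E + 1"
proof -
  obtain a where a: "a \<in> V" using assms(2) by (auto simp: mconnected_def)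
  have "V = (adj E)\<^sup>* `` {a}"
    using assms a is_mgraph_reach[of V E "{a}"] by (auto simp: mconnected_def)
  then show ?thesis using card_reach_le[OF assms(1), of "{a}"] a by simp
qed

(* Every edge is a bridge.  Unlike is_tree this passes to sub-multisets, so it supports
   induction over the edges. *)
definition mforest :: "'v set multiset \<Rightarrow> bool" where
  "mforest E \<longleftrightarrow> (\<forall>e\<in>#E. \<forall>a b. e = {a, b} \<longrightarrow> (a, b) \<notin> (adj (E - {#e#}))\<^sup>*)"

lemma mforest_add_mset:
  assumes "mforest (add_mset {a, b} E)"
  shows "mforest E" and "(a, b) \<notin> (adj E)\<^sup>*"
proof -
  show "(a, b) \<notin> (adj E)\<^sup>*"
    using assms[unfolded mforest_def, rule_format, of "{a, b}" a b] by simp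
  have "E - {#f#} \<subseteq># add_mset {a, b} E - {#f#}" for f
    by (simp add: subseteq_mset_def diff_le_mono)
  then have "(adj (E - {#f#}))\<^sup>* \<subseteq> (adj (add_mset {a, b} E - {#f#}))\<^sup>*" for f
    by (simp add: adj_mono rtrancl_mono)
  then show "mforest E" using assms unfolding mforest_def by (simp add: subset_iff) blast
qed

(* S contains at most one vertex of each component.  An added edge of a forest joins two
   components, one of which misses S, so S can be enlarged by one of its endpoints. *)
lemma mforest_size:
  assumes "is_mgraph V E" "mforest E" "S \<subseteq> V"
    and "\<forall>s\<in>S. \<forall>t\<in>S. (s, t) \<in> (adj E)\<^sup>* \<longrightarrow> s = t"
  shows "size E + card S \<le> card V"
  using assms
proof (induction E arbitrary: S)
  case empty
  then show ?case by (simp add: is_mgraph_def card_mono)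
next
  case (add e E)
  obtain a b where e: "e = {a, b}" and ab: "a \<in> V" "b \<in> V"
    using is_mgraph_edge[OF add.prems(1), of e] by auto
  have g: "is_mgraph V E" using add.prems(1) by (simp add: is_mgraph_def)
  have forest: "mforest E" and nab: "(a, b) \<notin> (adj E)\<^sup>*"
    using mforest_add_mset[of a b E] add.prems(2) e by auto
  have sub: "(adj E)\<^sup>* \<subseteq> (adj (add_mset e E))\<^sup>*"
    by (simp add: adj_mono rtrancl_mono)
  have ab_new: "(a, b) \<in> adj (add_mset e E)" by (simp add: e adj_add_mset)
  obtain c where c: "c \<in> V" "\<forall>s\<in>S. (s, c) \<notin> (adj E)\<^sup>*"
  proof (cases "\<forall>s\<in>S. (s, a) \<notin> (adj E)\<^sup>*")
    case True
    then show ?thesis using that ab by blast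
  next
    case False
    then obtain s where s: "s \<in> S" "(s, a) \<in> (adj E)\<^sup>*" by blast
    have "(t, b) \<notin> (adj E)\<^sup>*" if t: "t \<in> S" for t
    proof
      assume tb: "(t, b) \<in> (adj E)\<^sup>*"
      have "(s, b) \<in> (adj (add_mset e E))\<^sup>*"
        using subsetD[OF sub s(2)] ab_new by (rule rtrancl_into_rtrancl)
      moreover have "(b, t) \<in> (adj (add_mset e E))\<^sup>*"
        using subsetD[OF sub adj_rtrancl_sym[OF tb]] .
      ultimately have "s = t" using add.prems(4) s(1) t rtrancl_trans by metis
      then have "(a, b) \<in> (adj E)\<^sup>*" using adj_rtrancl_sym[OF s(2)] tb rtrancl_trans by metis
      then show False using nab by contradiction
    qed
    then show ?thesis using that ab by blast
  qed
  have "c \<notin> S" using c(2) by blast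
  have "s = t" if "s \<in> insert c S" "t \<in> insert c S" "(s, t) \<in> (adj E)\<^sup>*" for s t
    using that add.prems(4) c(2) subsetD[OF sub] adj_rtrancl_sym[of s t E] by auto
  then have "size E + card (insert c S) \<le> card V"
    using add.IH[OF g forest, of "insert c S"] add.prems(3) c(1) by blast
  then show ?case
    using \<open>c \<notin> S\<close> finite_subset[OF add.prems(3)] g by (simp add: is_mgraph_def)
qed

lemma tree_mforest:
  assumes "is_tree V T"
  shows "mforest T"
  unfolding mforest_def
proof (intro ballI allI impI notI)
  fix e a b
  assume e: "e \<in># T" "e = {a, b}" and ab: "(a, b) \<in> (adj (T - {#e#}))\<^sup>*"
  have "adj T = insert (a, b) (insert (b, a) (adj (T - {#e#})))"
    using e adj_add_mset by (metis insert_DiffM)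
  then have "adj T \<subseteq> (adj (T - {#e#}))\<^sup>*"
    using ab adj_rtrancl_sym by auto
  then have "(adj T)\<^sup>* \<subseteq> (adj (T - {#e#}))\<^sup>*"
    by (metis rtrancl_subset_rtrancl)
  then have "mconnected V (T - {#e#})"
    using assms by (auto simp: is_tree_def mconnected_def)
  then show False using assms e(1) by (auto simp: is_tree_def)
qed

lemma tree_size:
  assumes "is_tree V T"
  shows "size T + 1 = card V"
proof -
  have g: "is_mgraph V T" and c: "mconnected V T" using assms by (auto simp: is_tree_def)
  obtain a where "a \<in> V" using c by (auto simp: mconnected_def)
  then have "size T + 1 \<le> card V"
    using mforest_size[OF g tree_mforest[OF assms], of "{a}"] by simp
  then show ?thesis using mconnected_card_le[OF g c] by simp
qed

lemma tree_of_size: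
  assumes "is_mgraph V E" "mconnected V E" "size E + 1 = card V"
  shows "is_tree V E"
  unfolding is_tree_def
proof (intro conjI ballI notI)
  fix e assume e: "e \<in># E" and "mconnected V (E - {#e#})"
  then have "card V \<le> size (E - {#e#}) + 1"
    using mconnected_card_le is_mgraph_submset[OF assms(1)] by (meson diff_subset_eq_self)
  moreover have "size E = size (E - {#e#}) + 1"
    using e by (metis Suc_eq_plus1 insert_DiffM size_add_mset)
  ultimately show False using assms(3) by simp
qed (use assms in auto)

definition mdegree :: "'v set multiset \<Rightarrow> 'v \<Rightarrow> nat" where
  "mdegree E v = size (filter_mset (\<lambda>e. v \<in> e) E)"

lemma sum_mdegree:
  assumes "is_mgraph V E"
  shows "(\<Sum>x\<in>V. mdegree E x) = 2 * size E"
  using assms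
proof (induction E)
  case empty
  then show ?case by (simp add: mdegree_def)
next
  case (add e E)
  obtain a b where e: "e = {a, b}" "a \<noteq> b" "a \<in> V" "b \<in> V"
    using is_mgraph_edge[OF add.prems, of e] by auto
  have fin: "finite V" using add.prems by (simp add: is_mgraph_def)
  have "(\<Sum>x\<in>V. mdegree (add_mset e E) x) = (\<Sum>x\<in>V. mdegree E x + (if x \<in> e then 1 else 0))"
    by (intro sum.cong) (auto simp: mdegree_def)
  also have "\<dots> = (\<Sum>x\<in>V. mdegree E x) + card (V \<inter> e)"
    using fin by (simp add: sum.distrib sum.If_cases)
  also have "card (V \<inter> e) = 2" using e by (simp add: Int_absorb1)
  finally show ?case using add by (simp add: is_mgraph_def)
qed

lemma card_neighbours_le_mdegree: "card {w. {v, w} \<in># E} \<le> mdegree E v"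
proof -
  have "card {w. {v, w} \<in># E} \<le> card (set_mset (filter_mset (\<lambda>e. v \<in> e) E))"
    by (rule card_inj_on_le[where f = "\<lambda>w. {v, w}"]) (auto simp: inj_on_def doubleton_eq_iff)
  also have "\<dots> \<le> mdegree E v"
    unfolding mdegree_def by (induction E) (auto simp: card_insert_if)
  finally show ?thesis .
qed

lemma mconnected_has_neighbour:
  assumes "mconnected V E" "v \<in> V" "2 \<le> card V"
  obtains u where "{v, u} \<in># E"
proof -
  have "\<not> V \<subseteq> {v}" using assms(3) card_mono[of "{v}" V] by auto
  then obtain w where "w \<in> V" "w \<noteq> v" by blast
  then have "(v, w) \<in> (adj E)\<^sup>*" "v \<noteq> w" using assms(1,2) by (auto simp: mconnected_def)
  then obtain u where "(v, u) \<in> adj E" by (metis converse_rtranclE)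
  then show ?thesis using that by (simp add: adj_def)
qed

lemma mconnected_delete_vertex:
  assumes "mconnected V E" "u \<in> V - {v}"
    and "filter_mset (\<lambda>e. v \<notin> e) E \<subseteq># G"
    and "\<And>w. {v, w} \<in># E \<Longrightarrow> (u, w) \<in> (adj G)\<^sup>*"
  shows "mconnected (V - {v}) G"
proof -
  define C where "C = (adj G)\<^sup>* `` {u}"
  have "adj E `` insert v C \<subseteq> insert v C"
  proof (intro subsetI)
    fix y assume "y \<in> adj E `` insert v C"
    then obtain x where x: "x \<in> insert v C" "{x, y} \<in># E" by (auto simp: adj_def)
    show "y \<in> insert v C"
    proof (cases "x = v \<or> y = v")
      case True
      then show ?thesis using x assms(4) by (auto simp: C_def)
    next
      case False
      then have "(x, y) \<in> adj G"
        using x(2) assms(3) by (auto simp: adj_def dest: mset_subset_eqD)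
      then show ?thesis using x(1) False by (auto simp: C_def intro: rtrancl_into_rtrancl)
    qed
  qed
  then have "(adj E)\<^sup>* `` {u} \<subseteq> insert v C"
    by (intro rtrancl_Image_least) (auto simp: C_def)
  moreover have "V \<subseteq> (adj E)\<^sup>* `` {u}" using assms(1,2) by (auto simp: mconnected_def)
  ultimately show ?thesis using assms(2) by (intro mconnectedI[of u]) (auto simp: C_def)
qed

definition star :: "'v \<Rightarrow> 'v set \<Rightarrow> 'v set multiset" where
  "star u W = image_mset (\<lambda>w. {u, w}) (mset_set (W - {u}))"

lemma mem_star: "finite W \<Longrightarrow> e \<in># star u W \<longleftrightarrow> (\<exists>w\<in>W - {u}. e = {u, w})"
  by (auto simp: star_def)

lemma size_star: "finite W \<Longrightarrow> u \<in> W \<Longrightarrow> size (star u W) + 1 = card W"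
  by (simp add: star_def) (metis Suc_pred card_gt_0_iff empty_iff)

lemma is_mgraph_star:
  assumes "finite V" "W \<subseteq> V" "u \<in> W"
  shows "is_mgraph V (star u W)"
proof -
  have "finite W" using assms(1,2) by (rule finite_subset[rotated])
  show ?thesis
    unfolding is_mgraph_def
  proof (intro conjI ballI)
    fix e assume "e \<in># star u W"
    then obtain w where "w \<in> W - {u}" "e = {u, w}" using mem_star[OF \<open>finite W\<close>] by blast
    then show "\<exists>a b. e = {a, b} \<and> a \<noteq> b \<and> a \<in> V \<and> b \<in> V" using assms by blast
  qed (rule assms(1))
qed

lemma mextI:
  assumes "v \<notin> V" "F \<subseteq># E" "size F = j" "size N = d + j" "\<forall>e\<in>#N. \<exists>u\<in>V. e = {v, u}"
    and "E' = E - F + N" "\<forall>e\<in>#F. \<forall>w\<in>e. {v, w} \<in># E'"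
  shows "mext d j V E (insert v V) E' v"
  using assms unfolding mext_def by blast

lemma mext_empty: "v \<notin> V \<Longrightarrow> mext 0 0 V {#} (insert v V) {#} v"
  by (rule mextI[of _ _ "{#}" _ _ "{#}"]) auto

lemma mext_add:
  assumes "mext d j V E V' E' v" "mext d' j' V G V' G' v"
  shows "mext (d + d') (j + j') V (E + G) V' (E' + G') v"
proof -
  obtain F N where F: "F \<subseteq># E" "size F = j" "size N = d + j" "\<forall>e\<in>#N. \<exists>u\<in>V. e = {v, u}"
      "E' = E - F + N" "\<forall>e\<in>#F. \<forall>w\<in>e. {v, w} \<in># E'"
    and "v \<notin> V" "V' = insert v V"
    using assms(1) by (auto simp: mext_def)
  obtain F' N' where F': "F' \<subseteq># G" "size F' = j'" "size N' = d' + j'" "\<forall>e\<in>#N'. \<exists>u\<in>V. e = {v, u}"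
      "G' = G - F' + N'" "\<forall>e\<in>#F'. \<forall>w\<in>e. {v, w} \<in># G'"
    using assms(2) by (auto simp: mext_def)
  have sum_eq: "E' + G' = E + G - (F + F') + (N + N')"
  proof (rule multiset_eqI)
    fix x
    have "count F x \<le> count E x" "count F' x \<le> count G x"
      using F(1) F'(1) by (auto simp: subseteq_mset_def)
    then show "count (E' + G') x = count (E + G - (F + F') + (N + N')) x"
      using F(5) F'(5) by simp
  qed
  show ?thesis
    unfolding \<open>V' = insert v V\<close>
  proof (rule mextI[where F = "F + F'" and N = "N + N'"])
    show "\<forall>e\<in>#F + F'. \<forall>w\<in>e. {v, w} \<in># E' + G'" using F(6) F'(6) by auto
  qed (use sum_eq F(1-4) F'(1-4) \<open>v \<notin> V\<close> in \<open>auto simp: subset_mset.add_mono\<close>)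
qed

lemma mext_sum:
  assumes "finite I" "v \<notin> V"
    and "\<And>i. i \<in> I \<Longrightarrow> mext (d i) (j i) V (E i) (insert v V) (E' i) v"
  shows "mext (\<Sum>i\<in>I. d i) (\<Sum>i\<in>I. j i) V (\<Sum>i\<in>I. E i) (insert v V) (\<Sum>i\<in>I. E' i) v"
  using assms by (induction I rule: finite_induct) (auto intro: mext_empty mext_add)

lemma mext_mdegree:
  assumes "mext d j V E V' E' v" "is_mgraph V E"
  shows "mdegree E' v = d + j"
proof -
  obtain F N where F: "F \<subseteq># E" "size N = d + j" "\<forall>e\<in>#N. \<exists>u\<in>V. e = {v, u}" "E' = E - F + N"
    and "v \<notin> V" using assms(1) by (auto simp: mext_def)
  have "filter_mset (\<lambda>e. v \<in> e) E = {#}"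
    using \<open>v \<notin> V\<close> is_mgraph_edge[OF assms(2)] by (auto simp: filter_mset_eq_conv)
  then have "filter_mset (\<lambda>e. v \<in> e) (E - F) = {#}"
    by (metis diff_subset_eq_self multiset_filter_mono subset_mset.le_zero_eq)
  moreover have "filter_mset (\<lambda>e. v \<in> e) N = N" using F(3) by (auto simp: filter_mset_eq_conv)
  ultimately show ?thesis using F(2,4) by (simp add: mdegree_def)
qed

(* Connectivity of the new graph together with the edge count of a tree forces
   mdegree T v = card Nb, so the star has mdegree T v - 1 edges and the new graph is a tree. *)
lemma tree_delete_vertex:
  assumes t: "is_tree V T" and v: "v \<in> V" and two: "2 \<le> card V"
  shows "\<exists>T0 k. is_tree (V - {v}) T0 \<and> mext 1 k (V - {v}) T0 V T v"
proof -
  have g: "is_mgraph V T" and c: "mconnected V T" using t by (auto simp: is_tree_def)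
  define Nb where "Nb = {w. {v, w} \<in># T}"
  obtain u0 where u0: "u0 \<in> Nb" using mconnected_has_neighbour[OF c v two] by (auto simp: Nb_def)
  have Nb_sub: "Nb \<subseteq> V - {v}" using is_mgraph_adj[OF g] by (auto simp: Nb_def adj_def)
  have fin: "finite (V - {v})" "finite Nb"
    using Nb_sub g finite_subset by (auto simp: is_mgraph_def)
  define R where "R = filter_mset (\<lambda>e. v \<notin> e) T"
  define F where "F = star u0 Nb"
  define T0 where "T0 = R + F"
  have g0: "is_mgraph (V - {v}) T0"
    unfolding T0_def R_def F_def
    using g fin Nb_sub u0 by (intro is_mgraph_add is_mgraph_delete_vertex is_mgraph_star)
  have c0: "mconnected (V - {v}) T0"
  proof (rule mconnected_delete_vertex[OF c])
    show "u0 \<in> V - {v}" using u0 Nb_sub by blast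
    show "filter_mset (\<lambda>e. v \<notin> e) T \<subseteq># T0" by (simp add: T0_def R_def)
    fix w assume "{v, w} \<in># T"
    then have "w = u0 \<or> {u0, w} \<in># T0" using fin by (auto simp: T0_def F_def mem_star Nb_def)
    then show "(u0, w) \<in> (adj T0)\<^sup>*" by (auto simp: adj_def)
  qed
  have "size T = size R + mdegree T v"
    by (metis R_def add.commute mdegree_def multiset_partition size_union)
  moreover have "card (V - {v}) \<le> size T0 + 1" by (rule mconnected_card_le[OF g0 c0])
  ultimately have deg: "mdegree T v = size F + 1" and size_T0: "size T0 + 1 = card (V - {v})"
    using tree_size[OF t] size_star[OF fin(2) u0] card_neighbours_le_mdegree[of v T] v
    by (auto simp: T0_def F_def Nb_def)
  have "mext 1 (size F) (V - {v}) T0 (insert v (V - {v})) T v"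
  proof (rule mextI[where N = "filter_mset (\<lambda>e. v \<in> e) T"])
    show "T = T0 - F + filter_mset (\<lambda>e. v \<in> e) T"
      by (simp add: T0_def R_def multiset_partition[symmetric] add.commute)
    show "\<forall>e\<in>#F. \<forall>w\<in>e. {v, w} \<in># T" using fin u0 by (auto simp: F_def mem_star Nb_def)
  qed (use deg is_mgraph_edge[OF g] in \<open>auto simp: T0_def mdegree_def insert_commute\<close>)
  then have "mext 1 (size F) (V - {v}) T0 V T v" using v by (simp add: insert_absorb)
  then show ?thesis using tree_of_size[OF g0 c0 size_T0] by blast
qed

lemma dtree_decompI:
  assumes "finite V" "\<And>i. i < d \<Longrightarrow> is_tree V (Ts i)"
  shows "dtree_decomp d V (\<Sum>i<d. Ts i) Ts"
proof -
  have "Ts i \<subseteq># (\<Sum>i<d. Ts i)" if "i < d" for i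
    using that by (metis finite_lessThan lessThan_iff mset_subset_eq_add_left sum.remove)
  moreover have "is_mgraph V (\<Sum>i<d. Ts i)"
    using assms by (auto simp: is_mgraph_def is_tree_def set_mset_sum)
  ultimately show ?thesis using assms(2) by (simp add: dtree_decomp_def spanning_tree_def)
qed

lemma dtree_decomp_tree: "dtree_decomp d V E Ts \<Longrightarrow> i < d \<Longrightarrow> is_tree V (Ts i)"
  by (simp add: dtree_decomp_def spanning_tree_def)

lemma dtree_decomp_vertices:
  assumes "dtree_decomp d V E Ts" "1 \<le> d"
  shows "finite V" and "V \<noteq> {}"
  using dtree_decomp_tree[OF assms(1), of 0] assms(2)
  by (auto simp: is_tree_def is_mgraph_def mconnected_def)

lemma dtree_decomp_size:
  assumes "dtree_decomp d V E Ts"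
  shows "size E = d * (card V - 1)"
proof -
  have "size E = (\<Sum>i<d. size (Ts i))"
    using assms by (simp add: dtree_decomp_def)
  also have "\<dots> = (\<Sum>i<d. card V - 1)"
  proof (rule sum.cong)
    show "size (Ts i) = card V - 1" if "i \<in> {..<d}" for i
      using tree_size[OF dtree_decomp_tree[OF assms]] that by fastforce
  qed simp
  finally show ?thesis by simp
qed

lemma dtree_decomp_low_degree:
  assumes "dtree_decomp d V E Ts" "1 \<le> d"
  obtains v where "v \<in> V" "mdegree E v < 2 * d"
proof -
  have g: "is_mgraph V E" using assms(1) unfolding dtree_decomp_def by (rule conjunct1)
  obtain n where "card V = Suc n"
    using dtree_decomp_vertices[OF assms] by (metis card_gt_0_iff gr0_implies_Suc)
  then have "(\<Sum>x\<in>V. mdegree E x) < (\<Sum>x\<in>V. 2 * d)"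
    using sum_mdegree[OF g] dtree_decomp_size[OF assms(1)] assms(2) by simp
  then show ?thesis using that by (meson not_less sum_mono)
qed

lemma dtree_decomp_card_ge_2:
  assumes "1 \<le> d" "dtree_decomp d V E Ts"
    and "\<not> (\<exists>x. V = {x} \<and> E = {#} \<and> (\<forall>i<d. Ts i = {#}))"
  shows "2 \<le> card V"
proof -
  have "card V \<noteq> 1"
  proof
    assume "card V = 1"
    then obtain x where x: "V = {x}" by (rule card_1_singletonE)
    then have "E = {#}" using assms(2) is_mgraph_edge[of V E] by (auto simp: dtree_decomp_def)
    then have "\<forall>i<d. Ts i = {#}" using assms(2) by (auto simp: dtree_decomp_def spanning_tree_def)
    then show False using assms(3) x \<open>E = {#}\<close> by blast
  qed
  then show ?thesis using dtree_decomp_vertices[OF assms(2,1)] card_gt_0_iff[of V] by linarith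
qed

theorem proposition3p4:
  fixes d :: nat and V' :: "'v set" and E' :: "'v set multiset"
    and Ts' :: "nat \<Rightarrow> 'v set multiset"
  assumes "d \<ge> 1"
    and "dtree_decomp d V' E' Ts'"
    and "\<not> (\<exists>x. V' = {x} \<and> E' = {#} \<and> (\<forall>i<d. Ts' i = {#}))"
  shows "\<exists>V E Ts j. dtree_decomp d V E Ts \<and> j \<le> d - 1 \<and> dtree_ext d j V E Ts V' E' Ts'"
proof -
  have trees: "\<And>i. i < d \<Longrightarrow> is_tree V' (Ts' i)" using dtree_decomp_tree[OF assms(2)] .
  have two: "2 \<le> card V'" using dtree_decomp_card_ge_2[OF assms] .
  have "finite V'" using dtree_decomp_vertices[OF assms(2,1)] by simp
  obtain v where v: "v \<in> V'" and deg: "mdegree E' v < 2 * d"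
    using dtree_decomp_low_degree[OF assms(2,1)] .
  define V where "V = V' - {v}"
  have "\<forall>i. \<exists>T k. i < d \<longrightarrow> is_tree V T \<and> mext 1 k V T V' (Ts' i) v"
    using tree_delete_vertex[OF trees v two] by (auto simp: V_def)
  then obtain Ts k where Ts: "\<And>i. i < d \<Longrightarrow> is_tree V (Ts i) \<and> mext 1 (k i) V (Ts i) V' (Ts' i) v"
    by metis
  define j where "j = (\<Sum>i<d. k i)"
  have dec: "dtree_decomp d V (\<Sum>i<d. Ts i) Ts"
    using \<open>finite V'\<close> Ts by (intro dtree_decompI) (auto simp: V_def)
  have "mext d j V (\<Sum>i<d. Ts i) V' E' v"
    using mext_sum[of "{..<d}" v V "\<lambda>_. 1" k Ts Ts'] Ts v assms(2)
    by (simp add: V_def j_def insert_absorb dtree_decomp_def)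
  moreover have "j \<le> d - 1"
    using mext_mdegree[OF calculation] dec deg by (simp add: dtree_decomp_def)
  moreover have "k i \<le> j" if "i < d" for i
    using that by (auto simp: j_def intro: member_le_sum)
  ultimately have "dtree_ext d j V (\<Sum>i<d. Ts i) Ts V' E' Ts'"
    using Ts unfolding dtree_ext_def by (meson le_trans)
  then show ?thesis using dec \<open>j \<le> d - 1\<close> by blast
qed

end
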